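(* Let $\mathcal{K}$ be a closed convex cone in a finite-dimensional Euclidean space with $\dim\mathcal{K}>1$. Then there exists $\alpha>-1$ such that $$\sup_{y\in\mathcal{K},\ \|y\|=1}\langle x,y\rangle\ge\alpha\quad\text{for all }x\in\operatorname{span}\mathcal{K}\text{ with }\|x\|=1.$$ *)

theory Defs
  imports "HOL-Analysis.Analysis"
begin

end

theory Submission
  imports Defs
begin

text \<open>If the cone \<open>K\<close> contains two distinct unit vectors \<open>a\<close> and \<open>b\<close>, no unit vector \<open>x\<close> can be
  close to \<open>-a\<close> and to \<open>-b\<close> at the same time: \<open>\<parallel>a - b\<parallel> \<le> \<parallel>x + a\<parallel> + \<parallel>x + b\<parallel>\<close>, and
  \<open>\<parallel>x + a\<parallel>\<^sup>2 = 2 + 2 \<langle>x, a\<rangle>\<close>. Hence \<open>max \<langle>x, a\<rangle> \<langle>x, b\<rangle> \<ge> -1 + \<parallel>a - b\<parallel>\<^sup>2 / 8\<close> for every unit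
  vector \<open>x\<close>. Two such vectors exist as soon as \<open>dim K > 1\<close>, since otherwise \<open>K\<close> lies on
  a ray.\<close>

lemma sgn_in_cone:
  fixes K :: "'a::real_normed_vector set"
  assumes "cone K" and "v \<in> K"
  shows "sgn v \<in> K"
  using assms by (simp add: cone_def sgn_div_norm divide_inverse_commute)

lemma cone_dim_gt_1_obtains_distinct_unit_vectors:
  fixes K :: "'a::real_normed_vector set"
  assumes "cone K" and "dim K > 1"
  obtains a b where "a \<in> K" "b \<in> K" "norm a = 1" "norm b = 1" "a \<noteq> b"
proof (rule ccontr)
  assume "\<not> thesis"
  with that have unique: "a = b"
    if "a \<in> K" "b \<in> K" "norm a = 1" "norm b = 1" for a b
    using that by blast
  obtain u where "K \<subseteq> span {u}"
  proof (cases "K \<subseteq> {0}")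
    case True
    then show thesis using that[of 0] by auto
  next
    case False
    then obtain u where "u \<in> K" "u \<noteq> 0" by auto
    have "v \<in> span {sgn u}" if "v \<in> K" for v
    proof (cases "v = 0")
      case False
      have "sgn v = sgn u"
        using unique sgn_in_cone[OF \<open>cone K\<close>] \<open>v \<in> K\<close> \<open>u \<in> K\<close> \<open>u \<noteq> 0\<close> False
        by (simp add: norm_sgn)
      moreover have "v = norm v *\<^sub>R sgn v"
        using False by (simp add: sgn_div_norm)
      ultimately have "v = norm v *\<^sub>R sgn u"
        by simp
      then show ?thesis by (metis span_base span_mul insertI1)
    qed (simp add: span_zero)
    then show thesis using that by blast
  qed
  then have "dim K \<le> card {u}" by (rule dim_le_card) simp
  with \<open>dim K > 1\<close> show False by simp
qed

lemma inner_add_inner_ge_norm_diff_unit_vectors: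
  fixes x a b :: "'a::real_inner"
  assumes "norm x = 1" and "norm a = 1" and "norm b = 1"
  shows "(norm (a - b))\<^sup>2 / 4 - 2 \<le> x \<bullet> a + x \<bullet> b"
proof -
  have norm_add_sq: "(norm (x + y))\<^sup>2 = 2 + 2 * (x \<bullet> y)" if "norm y = 1" for y
    using dot_norm[of x y] \<open>norm x = 1\<close> that by simp
  have "norm (a - b) \<le> norm (x + a) + norm (x + b)"
    using norm_triangle_ineq4[of "x + a" "x + b"] by simp
  then have "(norm (a - b))\<^sup>2 \<le> (norm (x + a) + norm (x + b))\<^sup>2"
    by (simp add: power_mono)
  also have "\<dots> \<le> (norm (x + a) + norm (x + b))\<^sup>2 + (norm (x + a) - norm (x + b))\<^sup>2"
    by simp
  also have "\<dots> = 2 * ((norm (x + a))\<^sup>2 + (norm (x + b))\<^sup>2)"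
    by (simp add: power2_eq_square algebra_simps)
  also have "\<dots> = 8 + 4 * (x \<bullet> a + x \<bullet> b)"
    using norm_add_sq assms by simp
  finally show ?thesis by simp
qed

lemma inner_le_SUP_inner_unit_vectors:
  fixes x y :: "'a::real_inner"
  assumes "y \<in> K" and "norm y = 1"
  shows "x \<bullet> y \<le> (SUP z\<in>{z\<in>K. norm z = 1}. x \<bullet> z)"
proof (rule cSUP_upper)
  have "x \<bullet> z \<le> norm x" if "norm z = 1" for z
    using norm_cauchy_schwarz[of x z] that by simp
  then show "bdd_above ((\<lambda>z. x \<bullet> z) ` {z\<in>K. norm z = 1})"
    by (intro bdd_aboveI2[of _ _ "norm x"]) simp
qed (use assms in simp)

theorem proposition4p3:
  fixes K :: "'a::euclidean_space set"
  assumes "closed K" and "convex K" and "cone K" and "dim K > 1"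
  shows "\<exists>\<alpha>::real. \<alpha> > -1 \<and>
           (\<forall>x\<in>span K. norm x = 1 \<longrightarrow>
              (SUP y\<in>{y\<in>K. norm y = 1}. x \<bullet> y) \<ge> \<alpha>)"
proof -
  obtain a b where ab: "a \<in> K" "b \<in> K" "norm a = 1" "norm b = 1" "a \<noteq> b"
    using cone_dim_gt_1_obtains_distinct_unit_vectors[OF \<open>cone K\<close> \<open>dim K > 1\<close>] .
  show ?thesis
  proof (intro exI[of _ "(norm (a - b))\<^sup>2 / 8 - 1"] conjI ballI impI)
    show "(norm (a - b))\<^sup>2 / 8 - 1 > -1"
      using \<open>a \<noteq> b\<close> by simp
  next
    fix x :: 'a
    assume "norm x = 1"
    then have "(norm (a - b))\<^sup>2 / 4 - 2 \<le> x \<bullet> a + x \<bullet> b"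
      using ab by (intro inner_add_inner_ge_norm_diff_unit_vectors)
    moreover have "x \<bullet> a \<le> (SUP y\<in>{y\<in>K. norm y = 1}. x \<bullet> y)"
      and "x \<bullet> b \<le> (SUP y\<in>{y\<in>K. norm y = 1}. x \<bullet> y)"
      using ab by (simp_all add: inner_le_SUP_inner_unit_vectors)
    ultimately show "(SUP y\<in>{y\<in>K. norm y = 1}. x \<bullet> y) \<ge> (norm (a - b))\<^sup>2 / 8 - 1"
      by linarith
  qed
qed

end
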